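(* Let $d>1$ be an integer, let $E,F$ be non-isogenous complex elliptic curves, and let $P\in E[d]$ and $Q\in F[d]$ be points of order exactly $d$. Assume that $E/\langle P\rangle$ is not isomorphic to $E$ or that $F/\langle Q\rangle$ is not isomorphic to $F$. Then the abelian surface $A=(E\times F)/\langle (P,Q)\rangle$, endowed with the polarisation of type $(1,d)$ descending from the product polarisation $\mathcal O_E(d\cdot 0)\boxtimes\mathcal O_F(d\cdot 0)$, is not isomorphic (as an abstract abelian variety) to its dual abelian surface $\hat A$.
   Context: $\hat A=\mathrm{Pic}^0(A)$ denotes the dual abelian variety. *)

theory Defs
  imports Complex_Main
begin

text \<open>Complex elliptic curves are modelled analytically as complex tori C/L,
L = Z w1 + Z w2 a lattice; abelian surfaces as C^2/Lambda (C^2 = complex * complex).\<close>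

definition lat :: "complex \<Rightarrow> complex \<Rightarrow> complex set" where
  "lat w1 w2 = {of_int m * w1 + of_int n * w2 | m n. True}"

definition period_pair :: "complex \<Rightarrow> complex \<Rightarrow> bool" where
  "period_pair w1 w2 \<longleftrightarrow> w1 \<noteq> 0 \<and> Im (w2 / w1) \<noteq> 0"

text \<open>C/L1 and C/L2 are isogenous iff some nonzero alpha satisfies alpha L1 \<subseteq> L2.\<close>
definition isogenous_lat :: "complex set \<Rightarrow> complex set \<Rightarrow> bool" where
  "isogenous_lat L1 L2 \<longleftrightarrow> (\<exists>\<alpha>. \<alpha> \<noteq> 0 \<and> (\<lambda>z. \<alpha> * z) ` L1 \<subseteq> L2)"

definition iso_lat :: "complex set \<Rightarrow> complex set \<Rightarrow> bool" where
  "iso_lat L1 L2 \<longleftrightarrow> (\<exists>\<alpha>. \<alpha> \<noteq> 0 \<and> (\<lambda>z. \<alpha> * z) ` L1 = L2)"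

definition exact_order :: "complex set \<Rightarrow> nat \<Rightarrow> complex \<Rightarrow> bool" where
  "exact_order L d p \<longleftrightarrow> of_nat d * p \<in> L \<and> (\<forall>k. 0 < k \<and> k < d \<longrightarrow> of_nat k * p \<notin> L)"

definition quot_lat :: "complex set \<Rightarrow> complex \<Rightarrow> complex set" where
  "quot_lat L p = {l + of_int k * p | l k. l \<in> L}"

definition prod_quot_lat :: "complex set \<Rightarrow> complex set \<Rightarrow> complex \<Rightarrow> complex \<Rightarrow> (complex \<times> complex) set" where
  "prod_quot_lat L1 L2 p q = {(l1 + of_int k * p, l2 + of_int k * q) | l1 l2 k. l1 \<in> L1 \<and> l2 \<in> L2}"

text \<open>Dual torus: the dual of V/Lambda is Hom_antilinear(V,C)/Lambda^*, with
 Lambda^* = {l. Im (l Lambda) \<subseteq> Z}. Antilinear forms on C^2 are l(z) = a1 cnj z1 + a2 cnj z2,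
 identified C-linearly with (a1,a2).\<close>
definition dual_lat :: "(complex \<times> complex) set \<Rightarrow> (complex \<times> complex) set" where
  "dual_lat \<Lambda> = {(a1, a2). \<forall>(z1, z2) \<in> \<Lambda>. Im (a1 * cnj z1 + a2 * cnj z2) \<in> \<int>}"

text \<open>Complex tori C^2/Lambda1 and C^2/Lambda2 are isomorphic iff an invertible
 C-linear map sends Lambda1 onto Lambda2.\<close>
definition iso_tori2 :: "(complex \<times> complex) set \<Rightarrow> (complex \<times> complex) set \<Rightarrow> bool" where
  "iso_tori2 \<Lambda>1 \<Lambda>2 \<longleftrightarrow> (\<exists>a b c e. a * e - b * c \<noteq> 0 \<and>
      (\<lambda>(z1, z2). (a * z1 + b * z2, c * z1 + e * z2)) ` \<Lambda>1 = \<Lambda>2)"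

end

theory Submission
  imports Defs
begin

text \<open>Write L1 = lat w1 w2, L2 = lat v1 v2 and \<Lambda> = prod_quot_lat L1 L2 p q. An isomorphism
  of A onto its dual is a matrix M with M \<Lambda> = \<Lambda>^*. The dual of L = \<int>w1 + \<int>w2 is the
  homothetic lattice L / Im (w2 cnj w1), and \<Lambda> contains L1 \<times> 0 and 0 \<times> L2 while the
  coordinates of \<Lambda>^* lie in L1^* and L2^*; so a nonzero off-diagonal entry of M
  would give an isogeny between E and F, and M is diagonal, say M = diag (a, e). Since P and Q
  have the same order, (x, 0) \<in> \<Lambda> forces x \<in> L1, and intersecting M \<Lambda> = \<Lambda>^* with
  \<complex> \<times> 0 gives a L1 = (L1 + \<int>p)^*. As p has exact order d, the dual of L1 + \<int>p is again
  homothetic to L1 + \<int>p, hence E/\<langle>P\<rangle> \<cong> E; in the same way F/\<langle>Q\<rangle> \<cong> F.\<close>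

lemma lat_lincomb_mem: "of_int m * w1 + of_int n * w2 \<in> lat w1 w2"
  unfolding lat_def by blast

lemma lat_memE:
  assumes "z \<in> lat w1 w2"
  obtains m n where "z = of_int m * w1 + of_int n * w2"
  using assms unfolding lat_def by blast

lemma lat_zero: "0 \<in> lat w1 w2"
  using lat_lincomb_mem[of 0 w1 0 w2] by simp

lemma lat_basis: "w1 \<in> lat w1 w2" "w2 \<in> lat w1 w2"
  using lat_lincomb_mem[of 1 w1 0 w2] lat_lincomb_mem[of 0 w1 1 w2] by simp_all

lemma lat_diff:
  assumes "z \<in> lat w1 w2" "y \<in> lat w1 w2"
  shows "z - y \<in> lat w1 w2"
proof -
  obtain m n m' n' where "z = of_int m * w1 + of_int n * w2" "y = of_int m' * w1 + of_int n' * w2"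
    using assms by (meson lat_memE)
  then have "z - y = of_int (m - m') * w1 + of_int (n - n') * w2"
    by (simp add: algebra_simps)
  then show ?thesis
    by (metis lat_lincomb_mem)
qed

lemma lat_add: "z \<in> lat w1 w2 \<Longrightarrow> y \<in> lat w1 w2 \<Longrightarrow> z + y \<in> lat w1 w2"
  using lat_diff[of z w1 w2 "0 - y"] lat_diff[OF lat_zero, of y] by simp

lemma lat_mult_of_int:
  assumes "z \<in> lat w1 w2"
  shows "of_int k * z \<in> lat w1 w2"
proof -
  obtain m n where "z = of_int m * w1 + of_int n * w2"
    using assms by (rule lat_memE)
  then have "of_int k * z = of_int (k * m) * w1 + of_int (k * n) * w2"
    by (simp add: algebra_simps)
  then show ?thesis
    by (metis lat_lincomb_mem)
qed

lemma period_pair_Im_nonzero: "period_pair w1 w2 \<Longrightarrow> Im (w2 * cnj w1) \<noteq> 0"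
  unfolding period_pair_def by (simp add: Im_divide)

lemma exact_order_mult_mem_iff:
  assumes "exact_order (lat w1 w2) d p" "d > 0"
  shows "of_int k * p \<in> lat w1 w2 \<longleftrightarrow> int d dvd k"
proof
  have dp: "of_int t * (of_nat d * p) \<in> lat w1 w2" for t
    using assms(1) lat_mult_of_int unfolding exact_order_def by blast
  show "of_int k * p \<in> lat w1 w2" if "int d dvd k"
  proof -
    from that obtain t where "k = int d * t" ..
    then show ?thesis
      using dp[of t] by (simp add: mult.assoc mult.left_commute)
  qed
  assume kp: "of_int k * p \<in> lat w1 w2"
  define r where "r = k mod int d"
  have "(of_int k :: complex) = of_nat d * of_int (k div int d) + of_int r"
    unfolding r_def by (metis div_mult_mod_eq mult.commute of_int_add of_int_mult of_int_of_nat_eq)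
  then have "of_int r * p = of_int k * p - of_int (k div int d) * (of_nat d * p)"
    by (simp add: algebra_simps)
  then have "of_int r * p \<in> lat w1 w2"
    using lat_diff[OF kp dp] by simp
  moreover have "0 \<le> r" "r < int d"
    using \<open>d > 0\<close> by (simp_all add: r_def)
  ultimately have "of_nat (nat r) * p \<in> lat w1 w2"
    by simp
  then have "\<not> (0 < nat r \<and> nat r < d)"
    using assms(1) unfolding exact_order_def by blast
  with \<open>0 \<le> r\<close> \<open>r < int d\<close> have "r = 0"
    by linarith
  then show "int d dvd k"
    unfolding r_def by (rule mod_0_imp_dvd)
qed

lemma exact_order_coords_coprime:
  assumes "exact_order (lat w1 w2) d p" "d > 0"
    and dp: "of_nat d * p = of_int m * w1 + of_int n * w2"
  shows "coprime (gcd m n) (int d)"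
proof -
  define g where "g = gcd (gcd m n) (int d)"
  have "g \<noteq> 0"
    using \<open>d > 0\<close> by (simp add: g_def)
  have "g dvd m" "g dvd n" "g dvd int d"
    unfolding g_def by (meson dvd_trans gcd_dvd1 gcd_dvd2)+
  then obtain m' n' d' where m': "m = g * m'" and n': "n = g * n'" and d': "int d = g * d'"
    by (meson dvdE)
  have "(of_nat d :: complex) = of_int g * of_int d'"
    by (metis d' of_int_mult of_int_of_nat_eq)
  then have "of_int g * (of_int d' * p) = of_int g * (of_int m' * w1 + of_int n' * w2 :: complex)"
    using dp unfolding m' n' by (simp add: algebra_simps)
  then have "of_int d' * p \<in> lat w1 w2"
    using \<open>g \<noteq> 0\<close> lat_lincomb_mem by simp
  then have "int d dvd d'"
    using exact_order_mult_mem_iff[OF assms(1,2)] by blast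
  then obtain e where "d' = int d * e" ..
  with d' have "int d * (g * e) = int d * 1"
    by (simp add: algebra_simps)
  then have "g * e = 1"
    using \<open>d > 0\<close> by simp
  then have "g dvd 1"
    by (metis dvd_triv_left)
  then show ?thesis
    by (simp add: g_def coprime_iff_gcd_eq_1)
qed

lemma dvd_det_iff_cong_multiple:
  fixes m n r s d :: int
  assumes "coprime (gcd m n) d"
  shows "d dvd m * s - n * r \<longleftrightarrow> (\<exists>k r' s'. r = d * r' + k * m \<and> s = d * s' + k * n)"
proof
  assume "d dvd m * s - n * r"
  then obtain t where t: "m * s - n * r - d * t = 0"
    by (metis dvd_def diff_self)
  obtain u v where uv: "u * gcd m n + v * d = 1"
    using assms by (metis bezout_int coprime_iff_gcd_eq_1)
  obtain u' v' where "u' * m + v' * n = gcd m n"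
    using bezout_int by blast
  with uv obtain \<alpha> \<beta> \<gamma> where bez: "\<alpha> * m + \<beta> * n + \<gamma> * d = 1"
    by (metis distrib_left mult.assoc)
  define k where "k = \<alpha> * r + \<beta> * s"
  have "d * (\<gamma> * r - \<beta> * t) + k * m = r * (\<alpha> * m + \<beta> * n + \<gamma> * d) + \<beta> * (m * s - n * r - d * t)"
    unfolding k_def by algebra
  moreover have "d * (\<gamma> * s + \<alpha> * t) + k * n = s * (\<alpha> * m + \<beta> * n + \<gamma> * d) - \<alpha> * (m * s - n * r - d * t)"
    unfolding k_def by algebra
  ultimately have "r = d * (\<gamma> * r - \<beta> * t) + k * m" "s = d * (\<gamma> * s + \<alpha> * t) + k * n"
    unfolding bez t by simp_all
  then show "\<exists>k r' s'. r = d * r' + k * m \<and> s = d * s' + k * n"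
    by blast
next
  assume "\<exists>k r' s'. r = d * r' + k * m \<and> s = d * s' + k * n"
  then obtain k r' s' where "r = d * r' + k * m" "s = d * s' + k * n"
    by blast
  then have "m * s - n * r = d * (m * s' - n * r')"
    by (simp add: algebra_simps)
  then show "d dvd m * s - n * r" ..
qed

definition lat_dual :: "complex set \<Rightarrow> complex set" where
  "lat_dual L = {x. \<forall>z\<in>L. Im (x * cnj z) \<in> \<int>}"

lemma lat_dual_antimono: "A \<subseteq> B \<Longrightarrow> lat_dual B \<subseteq> lat_dual A"
  unfolding lat_dual_def by blast

lemma lat_dual_scaled_iff: "x \<in> lat_dual ((\<lambda>z. c * z) ` A) \<longleftrightarrow> x * cnj c \<in> lat_dual A"
proof -
  have "x * cnj (c * z) = x * cnj c * cnj z" for z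
    by (simp add: mult.assoc)
  then show ?thesis
    unfolding lat_dual_def by (simp only: mem_Collect_eq ball_simps(9))
qed

lemma Im_lincomb_div_mult_cnj_lincomb:
  assumes "Im (w2 * cnj w1) \<noteq> 0"
  shows "Im ((of_int r * w1 + of_int s * w2) / of_real (Im (w2 * cnj w1)) *
      cnj (of_int m * w1 + of_int n * w2)) = of_int (m * s - n * r)"
proof -
  have numerator: "Im ((of_int r * w1 + of_int s * w2) * cnj (of_int m * w1 + of_int n * w2)) =
      of_int (m * s - n * r) * Im (w2 * cnj w1)"
    by (simp add: algebra_simps)
  show ?thesis
    unfolding times_divide_eq_left Im_divide_of_real numerator using assms by simp
qed

lemma lat_dual_lat:
  assumes "period_pair w1 w2"
  shows "lat_dual (lat w1 w2) = (\<lambda>z. z / of_real (Im (w2 * cnj w1))) ` lat w1 w2"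
proof -
  define D where "D = Im (w2 * cnj w1)"
  have "D \<noteq> 0"
    unfolding D_def using assms by (rule period_pair_Im_nonzero)
  have "lat_dual (lat w1 w2) = (\<lambda>z. z / of_real D) ` lat w1 w2"
  proof (intro equalityI subsetI)
    fix x
    assume "x \<in> lat_dual (lat w1 w2)"
    then have "Im (x * cnj w1) \<in> \<int>" "Im (x * cnj w2) \<in> \<int>"
      using lat_basis unfolding lat_dual_def by blast+
    then obtain s t where "Im (x * cnj w1) = of_int s" "Im (x * cnj w2) = of_int t"
      by (metis Ints_cases)
    \<comment> \<open>Cramer's rule for the real basis w1, w2\<close>
    moreover have "x * of_real D = - of_real (Im (x * cnj w2)) * w1 + of_real (Im (x * cnj w1)) * w2"
      unfolding D_def by (simp add: complex_eq_iff algebra_simps)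
    ultimately have "x * of_real D = of_int (- t) * w1 + of_int s * w2"
      by simp
    then have "x = (of_int (- t) * w1 + of_int s * w2) / of_real D"
      using \<open>D \<noteq> 0\<close> by (simp add: eq_divide_eq)
    then show "x \<in> (\<lambda>z. z / of_real D) ` lat w1 w2"
      using lat_lincomb_mem by blast
  next
    fix x
    assume "x \<in> (\<lambda>z. z / of_real D) ` lat w1 w2"
    then obtain r s where x: "x = (of_int r * w1 + of_int s * w2) / of_real D"
      by (blast elim: lat_memE)
    show "x \<in> lat_dual (lat w1 w2)"
      unfolding lat_dual_def
    proof (safe elim!: lat_memE)
      fix m n
      have "Im (x * cnj (of_int m * w1 + of_int n * w2)) = of_int (m * s - n * r)"
        using \<open>D \<noteq> 0\<close> unfolding x D_def by (rule Im_lincomb_div_mult_cnj_lincomb)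
      then show "Im (x * cnj (of_int m * w1 + of_int n * w2)) \<in> \<int>"
        by simp
    qed
  qed
  then show ?thesis
    by (simp add: D_def)
qed

lemma isogenous_lat_if_scaled_into_dual:
  assumes "period_pair v1 v2" "c \<noteq> 0" "(\<lambda>z. c * z) ` L \<subseteq> lat_dual (lat v1 v2)"
  shows "isogenous_lat L (lat v1 v2)"
proof -
  define D where "D = Im (v2 * cnj v1)"
  have "D \<noteq> 0"
    unfolding D_def using assms(1) by (rule period_pair_Im_nonzero)
  have "(\<lambda>z. c * of_real D * z) ` L \<subseteq> lat v1 v2"
  proof safe
    fix l
    assume "l \<in> L"
    then have "c * l \<in> (\<lambda>z. z / of_real D) ` lat v1 v2"
      using assms(3) lat_dual_lat[OF assms(1)] unfolding D_def by blast
    then obtain l' where "l' \<in> lat v1 v2" "c * l = l' / of_real D"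
      by blast
    then show "c * of_real D * l \<in> lat v1 v2"
      using \<open>D \<noteq> 0\<close> by (simp add: field_simps)
  qed
  moreover have "c * of_real D \<noteq> 0"
    using assms(2) \<open>D \<noteq> 0\<close> by simp
  ultimately show ?thesis
    unfolding isogenous_lat_def by blast
qed

lemma isogenous_lat_sym:
  assumes "period_pair w1 w2" "period_pair v1 v2" "isogenous_lat (lat w1 w2) (lat v1 v2)"
  shows "isogenous_lat (lat v1 v2) (lat w1 w2)"
proof -
  obtain \<alpha> where "\<alpha> \<noteq> 0" and \<alpha>: "(\<lambda>z. \<alpha> * z) ` lat w1 w2 \<subseteq> lat v1 v2"
    using assms(3) unfolding isogenous_lat_def by blast
  define D where "D = Im (v2 * cnj v1)"
  have "D \<noteq> 0"
    unfolding D_def using assms(2) by (rule period_pair_Im_nonzero)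
  have "(\<lambda>z. cnj \<alpha> / of_real D * z) ` lat v1 v2 \<subseteq> lat_dual (lat w1 w2)"
  proof safe
    fix l
    assume "l \<in> lat v1 v2"
    then have "l / of_real D \<in> lat_dual (lat v1 v2)"
      using lat_dual_lat[OF assms(2)] unfolding D_def by blast
    then have "l / of_real D \<in> lat_dual ((\<lambda>z. \<alpha> * z) ` lat w1 w2)"
      using lat_dual_antimono[OF \<alpha>] by blast
    then show "cnj \<alpha> / of_real D * l \<in> lat_dual (lat w1 w2)"
      unfolding lat_dual_scaled_iff by (simp add: mult.commute)
  qed
  moreover have "cnj \<alpha> / of_real D \<noteq> 0"
    using \<open>\<alpha> \<noteq> 0\<close> \<open>D \<noteq> 0\<close> by simp
  ultimately show ?thesis
    using isogenous_lat_if_scaled_into_dual[OF assms(1)] by blast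
qed

lemma lat_dual_quot_lat_iff:
  assumes "0 \<in> L"
  shows "x \<in> lat_dual (quot_lat L p) \<longleftrightarrow> x \<in> lat_dual L \<and> Im (x * cnj p) \<in> \<int>"
proof
  assume "x \<in> lat_dual (quot_lat L p)"
  moreover have "L \<subseteq> quot_lat L p"
    unfolding quot_lat_def by force
  moreover have "p \<in> quot_lat L p"
    using assms unfolding quot_lat_def by force
  ultimately show "x \<in> lat_dual L \<and> Im (x * cnj p) \<in> \<int>"
    unfolding lat_dual_def by blast
next
  assume x: "x \<in> lat_dual L \<and> Im (x * cnj p) \<in> \<int>"
  show "x \<in> lat_dual (quot_lat L p)"
    unfolding lat_dual_def
  proof safe
    fix z
    assume "z \<in> quot_lat L p"
    then obtain l k where "z = l + of_int k * p" "l \<in> L"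
      unfolding quot_lat_def by blast
    moreover from this have "Im (x * cnj z) = Im (x * cnj l) + of_int k * Im (x * cnj p)"
      by (simp add: algebra_simps)
    ultimately show "Im (x * cnj z) \<in> \<int>"
      using x unfolding lat_dual_def by auto
  qed
qed

lemma lat_dual_quot_lat_eq_coords:
  assumes "period_pair w1 w2" "d > 0"
    and dp: "of_nat d * p = of_int m * w1 + of_int n * w2"
  shows "lat_dual (quot_lat (lat w1 w2) p) = (\<lambda>z. z / of_real (Im (w2 * cnj w1))) `
    {of_int r * w1 + of_int s * w2 | r s. int d dvd m * s - n * r}"
proof -
  define D where "D = Im (w2 * cnj w1)"
  have "D \<noteq> 0"
    unfolding D_def using assms(1) by (rule period_pair_Im_nonzero)
  have Im_cnj_p: "Im ((of_int r * w1 + of_int s * w2) / of_real D * cnj p) \<in> \<int> \<longleftrightarrow>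
      int d dvd m * s - n * r" for r s
  proof -
    let ?x = "(of_int r * w1 + of_int s * w2) / of_real D"
    have "of_nat d * Im (?x * cnj p) = Im (?x * cnj (of_nat d * p))"
      by (simp add: algebra_simps)
    also have "\<dots> = of_int (m * s - n * r)"
      using \<open>D \<noteq> 0\<close> unfolding dp D_def by (rule Im_lincomb_div_mult_cnj_lincomb)
    finally have "Im (?x * cnj p) = of_int (m * s - n * r) / of_int (int d)"
      using \<open>d > 0\<close> by (simp add: field_simps)
    then show ?thesis
      using \<open>d > 0\<close> of_int_div_of_int_in_Ints_iff[of "m * s - n * r" "int d", where 'a=real]
      by simp
  qed
  have "x \<in> lat_dual (quot_lat (lat w1 w2) p) \<longleftrightarrow>
      (\<exists>r s. x = (of_int r * w1 + of_int s * w2) / of_real D \<and> int d dvd m * s - n * r)" for x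
    unfolding lat_dual_quot_lat_iff[OF lat_zero] lat_dual_lat[OF assms(1), folded D_def]
    using Im_cnj_p by (blast elim: lat_memE intro: lat_lincomb_mem)
  then show ?thesis
    unfolding D_def by blast
qed

lemma scaled_quot_lat_eq_coords:
  assumes dp: "of_nat d * p = of_int m * w1 + of_int n * w2"
  shows "(\<lambda>z. of_nat d * z) ` quot_lat (lat w1 w2) p =
    {of_int r * w1 + of_int s * w2 | r s. \<exists>k r' s'. r = int d * r' + k * m \<and> s = int d * s' + k * n}"
proof (intro equalityI subsetI)
  have scaled: "of_nat d * (of_int r' * w1 + of_int s' * w2 + of_int k * p) =
      of_int (int d * r' + k * m) * w1 + of_int (int d * s' + k * n) * w2" for r' s' k
  proof -
    have "of_nat d * (of_int r' * w1 + of_int s' * w2 + of_int k * p) =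
        of_nat d * (of_int r' * w1 + of_int s' * w2) + of_int k * (of_nat d * p)"
      by (simp add: algebra_simps)
    then show ?thesis
      unfolding dp by (simp add: algebra_simps)
  qed
  fix x
  {
    assume "x \<in> (\<lambda>z. of_nat d * z) ` quot_lat (lat w1 w2) p"
    then obtain r' s' k where "x = of_nat d * (of_int r' * w1 + of_int s' * w2 + of_int k * p)"
      unfolding quot_lat_def by (blast elim: lat_memE)
    then show "x \<in> {of_int r * w1 + of_int s * w2 | r s.
        \<exists>k r' s'. r = int d * r' + k * m \<and> s = int d * s' + k * n}"
      unfolding scaled by blast
  next
    assume "x \<in> {of_int r * w1 + of_int s * w2 | r s.
        \<exists>k r' s'. r = int d * r' + k * m \<and> s = int d * s' + k * n}"
    then obtain k r' s' where "x = of_int (int d * r' + k * m) * w1 + of_int (int d * s' + k * n) * w2"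
      by blast
    moreover have "of_int r' * w1 + of_int s' * w2 + of_int k * p \<in> quot_lat (lat w1 w2) p"
      unfolding quot_lat_def using lat_lincomb_mem by blast
    ultimately show "x \<in> (\<lambda>z. of_nat d * z) ` quot_lat (lat w1 w2) p"
      by (metis image_eqI scaled)
  }
qed

lemma lat_dual_quot_lat:
  assumes "period_pair w1 w2" "exact_order (lat w1 w2) d p" "d > 0"
  shows "lat_dual (quot_lat (lat w1 w2) p) =
    (\<lambda>z. of_nat d / of_real (Im (w2 * cnj w1)) * z) ` quot_lat (lat w1 w2) p"
proof -
  define D where "D = Im (w2 * cnj w1)"
  obtain m n where dp: "of_nat d * p = of_int m * w1 + of_int n * w2"
    using assms(2) unfolding exact_order_def by (blast elim: lat_memE)
  have "lat_dual (quot_lat (lat w1 w2) p) =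
      (\<lambda>z. z / of_real D) ` {of_int r * w1 + of_int s * w2 | r s. int d dvd m * s - n * r}"
    unfolding D_def using assms(1,3) dp by (rule lat_dual_quot_lat_eq_coords)
  also have "\<dots> = (\<lambda>z. z / of_real D) ` {of_int r * w1 + of_int s * w2 | r s.
      \<exists>k r' s'. r = int d * r' + k * m \<and> s = int d * s' + k * n}"
    unfolding dvd_det_iff_cong_multiple[OF exact_order_coords_coprime[OF assms(2,3) dp]] ..
  also have "\<dots> = (\<lambda>z. z / of_real D) ` (\<lambda>z. of_nat d * z) ` quot_lat (lat w1 w2) p"
    unfolding scaled_quot_lat_eq_coords[OF dp] ..
  also have "\<dots> = (\<lambda>z. of_nat d / of_real D * z) ` quot_lat (lat w1 w2) p"
    by (simp add: image_image)
  finally show ?thesis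
    unfolding D_def .
qed

lemma iso_lat_if_scaled_images_eq:
  assumes "a \<noteq> 0" "\<kappa> \<noteq> 0" "(\<lambda>z. a * z) ` A = (\<lambda>z. \<kappa> * z) ` B"
  shows "iso_lat B A"
proof -
  have "(\<lambda>z. \<kappa> / a * z) ` B = (\<lambda>z. z / a) ` (\<lambda>z. \<kappa> * z) ` B"
    by (simp add: image_image)
  also have "\<dots> = (\<lambda>z. z / a) ` (\<lambda>z. a * z) ` A"
    using assms(3) by simp
  also have "\<dots> = A"
    using assms(1) by (simp add: image_image)
  finally show ?thesis
    unfolding iso_lat_def using assms(1,2) by (intro exI[of _ "\<kappa> / a"]) simp
qed

lemma prod_quot_lat_swap: "prod.swap ` prod_quot_lat L1 L2 p q = prod_quot_lat L2 L1 q p"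
  unfolding prod_quot_lat_def by force

lemma dual_lat_swap: "dual_lat (prod.swap ` \<Lambda>) = prod.swap ` dual_lat \<Lambda>"
  unfolding dual_lat_def by (force simp: add.commute)

lemma iso_onto_dual_swap:
  assumes "(\<lambda>(z1, z2). (a * z1 + b * z2, c * z1 + e * z2)) ` prod_quot_lat L1 L2 p q =
      dual_lat (prod_quot_lat L1 L2 p q)"
  shows "(\<lambda>(z1, z2). (e * z1 + c * z2, b * z1 + a * z2)) ` prod_quot_lat L2 L1 q p =
      dual_lat (prod_quot_lat L2 L1 q p)"
proof -
  have swap_comm: "(\<lambda>(z1, z2). (e * z1 + c * z2, b * z1 + a * z2)) \<circ> prod.swap =
      prod.swap \<circ> (\<lambda>(z1, z2). (a * z1 + b * z2, c * z1 + e * z2))"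
    by (auto simp: add.commute)
  have "(\<lambda>(z1, z2). (e * z1 + c * z2, b * z1 + a * z2)) ` prod_quot_lat L2 L1 q p =
      (\<lambda>(z1, z2). (e * z1 + c * z2, b * z1 + a * z2)) ` prod.swap ` prod_quot_lat L1 L2 p q"
    by (simp only: prod_quot_lat_swap)
  also have "\<dots> = prod.swap ` (\<lambda>(z1, z2). (a * z1 + b * z2, c * z1 + e * z2)) ` prod_quot_lat L1 L2 p q"
    by (simp only: image_comp swap_comm)
  also have "\<dots> = prod.swap ` dual_lat (prod_quot_lat L1 L2 p q)"
    by (simp only: assms)
  also have "\<dots> = dual_lat (prod_quot_lat L2 L1 q p)"
    by (simp only: dual_lat_swap[symmetric] prod_quot_lat_swap)
  finally show ?thesis .
qed

lemma prod_quot_lat_fst_memI: "0 \<in> L2 \<Longrightarrow> l \<in> L1 \<Longrightarrow> (l, 0) \<in> prod_quot_lat L1 L2 p q"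
  unfolding prod_quot_lat_def by force

lemma prod_quot_lat_fst_memD:
  assumes "exact_order (lat w1 w2) d p" "exact_order (lat v1 v2) d q" "d > 0"
    and "(x, 0) \<in> prod_quot_lat (lat w1 w2) (lat v1 v2) p q"
  shows "x \<in> lat w1 w2"
proof -
  obtain l1 l2 k where x: "x = l1 + of_int k * p" "l1 \<in> lat w1 w2"
    and "0 = l2 + of_int k * q" "l2 \<in> lat v1 v2"
    using assms(4) unfolding prod_quot_lat_def by blast
  then have "of_int k * q = 0 - l2"
    by (metis add_diff_cancel_left')
  then have "of_int k * q \<in> lat v1 v2"
    using lat_diff[OF lat_zero \<open>l2 \<in> lat v1 v2\<close>] by simp
  then have "of_int k * p \<in> lat w1 w2"
    using exact_order_mult_mem_iff[OF assms(2,3)] exact_order_mult_mem_iff[OF assms(1,3)] by blast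
  then show ?thesis
    using x lat_add by blast
qed

lemma dual_lat_prod_quot_lat_fst_slice:
  assumes "0 \<in> L2"
  shows "(x, 0) \<in> dual_lat (prod_quot_lat L1 L2 p q) \<longleftrightarrow> x \<in> lat_dual (quot_lat L1 p)"
proof
  assume x: "(x, 0) \<in> dual_lat (prod_quot_lat L1 L2 p q)"
  show "x \<in> lat_dual (quot_lat L1 p)"
    unfolding lat_dual_def
  proof safe
    fix z
    assume "z \<in> quot_lat L1 p"
    then obtain l k where "z = l + of_int k * p" "l \<in> L1"
      unfolding quot_lat_def by blast
    then have "(z, of_int k * q) \<in> prod_quot_lat L1 L2 p q"
      unfolding prod_quot_lat_def using assms by force
    then show "Im (x * cnj z) \<in> \<int>"
      using x unfolding dual_lat_def by fastforce
  qed
next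
  assume x: "x \<in> lat_dual (quot_lat L1 p)"
  show "(x, 0) \<in> dual_lat (prod_quot_lat L1 L2 p q)"
    unfolding dual_lat_def
  proof safe
    fix z1 z2
    assume "(z1, z2) \<in> prod_quot_lat L1 L2 p q"
    then have "z1 \<in> quot_lat L1 p"
      unfolding prod_quot_lat_def quot_lat_def by blast
    then show "Im (x * cnj z1 + 0 * cnj z2) \<in> \<int>"
      using x unfolding lat_dual_def by simp
  qed
qed

lemma dual_lat_prod_quot_lat_snd_mem:
  assumes "0 \<in> L1" "(x1, x2) \<in> dual_lat (prod_quot_lat L1 L2 p q)"
  shows "x2 \<in> lat_dual L2"
  unfolding lat_dual_def
proof safe
  fix z
  assume "z \<in> L2"
  then have "(0, z) \<in> prod_quot_lat L1 L2 p q"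
    unfolding prod_quot_lat_def using assms(1) by force
  then show "Im (x2 * cnj z) \<in> \<int>"
    using assms(2) unfolding dual_lat_def by fastforce
qed

lemma iso_onto_dual_lower_left_zero:
  assumes "period_pair v1 v2" "\<not> isogenous_lat (lat w1 w2) (lat v1 v2)"
    and "(\<lambda>(z1, z2). (a * z1 + b * z2, c * z1 + e * z2)) ` prod_quot_lat (lat w1 w2) (lat v1 v2) p q \<subseteq>
      dual_lat (prod_quot_lat (lat w1 w2) (lat v1 v2) p q)"
  shows "c = 0"
proof (rule ccontr)
  assume "c \<noteq> 0"
  have "(\<lambda>z. c * z) ` lat w1 w2 \<subseteq> lat_dual (lat v1 v2)"
  proof safe
    fix l
    assume "l \<in> lat w1 w2"
    then have "(l, 0) \<in> prod_quot_lat (lat w1 w2) (lat v1 v2) p q"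
      by (rule prod_quot_lat_fst_memI[OF lat_zero])
    then have "(\<lambda>(z1, z2). (a * z1 + b * z2, c * z1 + e * z2)) (l, 0) \<in>
        dual_lat (prod_quot_lat (lat w1 w2) (lat v1 v2) p q)"
      using assms(3) by blast
    then have "(a * l, c * l) \<in> dual_lat (prod_quot_lat (lat w1 w2) (lat v1 v2) p q)"
      by simp
    then show "c * l \<in> lat_dual (lat v1 v2)"
      by (rule dual_lat_prod_quot_lat_snd_mem[OF lat_zero])
  qed
  then show False
    using isogenous_lat_if_scaled_into_dual[OF assms(1) \<open>c \<noteq> 0\<close>] assms(2) by blast
qed

lemma iso_lat_quot_if_diagonal_iso_onto_dual:
  assumes "period_pair w1 w2" "exact_order (lat w1 w2) d p" "exact_order (lat v1 v2) d q" "d > 0"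
    and "a \<noteq> 0" "e \<noteq> 0"
    and M: "(\<lambda>(z1, z2). (a * z1, e * z2)) ` prod_quot_lat (lat w1 w2) (lat v1 v2) p q =
      dual_lat (prod_quot_lat (lat w1 w2) (lat v1 v2) p q)"
  shows "iso_lat (quot_lat (lat w1 w2) p) (lat w1 w2)"
proof -
  let ?\<Lambda> = "prod_quot_lat (lat w1 w2) (lat v1 v2) p q"
  define \<kappa> :: complex where "\<kappa> = of_nat d / of_real (Im (w2 * cnj w1))"
  have slice: "(z, 0) \<in> ?\<Lambda> \<longleftrightarrow> z \<in> lat w1 w2" for z
    using prod_quot_lat_fst_memI[OF lat_zero] prod_quot_lat_fst_memD[OF assms(2-4)] by blast
  have "x \<in> (\<lambda>z. a * z) ` lat w1 w2 \<longleftrightarrow> (x, 0) \<in> (\<lambda>(z1, z2). (a * z1, e * z2)) ` ?\<Lambda>" for x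
  proof
    assume "x \<in> (\<lambda>z. a * z) ` lat w1 w2"
    then obtain z where "(z, 0) \<in> ?\<Lambda>" "(x, 0) = (\<lambda>(z1, z2). (a * z1, e * z2)) (z, 0)"
      using slice by auto
    then show "(x, 0) \<in> (\<lambda>(z1, z2). (a * z1, e * z2)) ` ?\<Lambda>"
      by (rule rev_image_eqI)
  next
    assume "(x, 0) \<in> (\<lambda>(z1, z2). (a * z1, e * z2)) ` ?\<Lambda>"
    then obtain z1 z2 where "(z1, z2) \<in> ?\<Lambda>" "x = a * z1" "e * z2 = 0"
      by auto
    then show "x \<in> (\<lambda>z. a * z) ` lat w1 w2"
      using \<open>e \<noteq> 0\<close> slice by auto
  qed
  also have "\<dots> x \<longleftrightarrow> x \<in> (\<lambda>z. \<kappa> * z) ` quot_lat (lat w1 w2) p" for x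
    unfolding M dual_lat_prod_quot_lat_fst_slice[OF lat_zero] lat_dual_quot_lat[OF assms(1,2,4)] \<kappa>_def ..
  finally have "(\<lambda>z. a * z) ` lat w1 w2 = (\<lambda>z. \<kappa> * z) ` quot_lat (lat w1 w2) p"
    by blast
  moreover have "\<kappa> \<noteq> 0"
    unfolding \<kappa>_def divide_eq_0_iff of_real_eq_0_iff of_nat_eq_0_iff
    using period_pair_Im_nonzero[OF assms(1)] assms(4) by blast
  ultimately show ?thesis
    using iso_lat_if_scaled_images_eq[OF \<open>a \<noteq> 0\<close>] by blast
qed

theorem theorem2p5:
  fixes d :: nat and w1 w2 v1 v2 p q :: complex
  assumes "d > 1"
    and "period_pair w1 w2" and "period_pair v1 v2"
    and "\<not> isogenous_lat (lat w1 w2) (lat v1 v2)"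
    and "exact_order (lat w1 w2) d p" and "exact_order (lat v1 v2) d q"
    and "\<not> iso_lat (quot_lat (lat w1 w2) p) (lat w1 w2) \<or>
         \<not> iso_lat (quot_lat (lat v1 v2) q) (lat v1 v2)"
  shows "\<not> iso_tori2 (prod_quot_lat (lat w1 w2) (lat v1 v2) p q)
                     (dual_lat (prod_quot_lat (lat w1 w2) (lat v1 v2) p q))"
proof
  assume "iso_tori2 (prod_quot_lat (lat w1 w2) (lat v1 v2) p q)
                    (dual_lat (prod_quot_lat (lat w1 w2) (lat v1 v2) p q))"
  then obtain a b c e where det: "a * e - b * c \<noteq> 0"
    and M: "(\<lambda>(z1, z2). (a * z1 + b * z2, c * z1 + e * z2)) ` prod_quot_lat (lat w1 w2) (lat v1 v2) p q =
      dual_lat (prod_quot_lat (lat w1 w2) (lat v1 v2) p q)"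
    unfolding iso_tori2_def by blast
  \<comment> \<open>Exchanging the factors turns M into [[e, c], [b, a]], so the same lemmas treat both
    off-diagonal entries and both factors.\<close>
  have M_swap: "(\<lambda>(z1, z2). (e * z1 + c * z2, b * z1 + a * z2)) ` prod_quot_lat (lat v1 v2) (lat w1 w2) q p =
      dual_lat (prod_quot_lat (lat v1 v2) (lat w1 w2) q p)"
    using M by (rule iso_onto_dual_swap)
  have "\<not> isogenous_lat (lat v1 v2) (lat w1 w2)"
    using assms(2-4) isogenous_lat_sym by blast
  then have "b = 0"
    using M_swap[THEN equalityD1] by (rule iso_onto_dual_lower_left_zero[OF assms(2)])
  have "c = 0"
    using M[THEN equalityD1] by (rule iso_onto_dual_lower_left_zero[OF assms(3,4)])
  with det \<open>b = 0\<close> have "a \<noteq> 0" "e \<noteq> 0"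
    by auto
  have "(\<lambda>(z1, z2). (a * z1, e * z2)) ` prod_quot_lat (lat w1 w2) (lat v1 v2) p q =
      dual_lat (prod_quot_lat (lat w1 w2) (lat v1 v2) p q)"
    using M \<open>b = 0\<close> \<open>c = 0\<close> by simp
  then have "iso_lat (quot_lat (lat w1 w2) p) (lat w1 w2)"
    using \<open>d > 1\<close> by (intro iso_lat_quot_if_diagonal_iso_onto_dual[OF assms(2,5,6) _ \<open>a \<noteq> 0\<close> \<open>e \<noteq> 0\<close>]) simp_all
  moreover have "(\<lambda>(z1, z2). (e * z1, a * z2)) ` prod_quot_lat (lat v1 v2) (lat w1 w2) q p =
      dual_lat (prod_quot_lat (lat v1 v2) (lat w1 w2) q p)"
    using M_swap \<open>b = 0\<close> \<open>c = 0\<close> by simp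
  then have "iso_lat (quot_lat (lat v1 v2) q) (lat v1 v2)"
    using \<open>d > 1\<close> by (intro iso_lat_quot_if_diagonal_iso_onto_dual[OF assms(3,6,5) _ \<open>e \<noteq> 0\<close> \<open>a \<noteq> 0\<close>]) simp_all
  ultimately show False
    using assms(7) by blast
qed

end
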